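(* Let $X$ be a finite $T_0$ topological space, let $\mathcal V$ be a multivector field on $X$ such that $X$ is invariant, and let $\mathcal M=\{M_p\mid p\in\mathbb P\}$ be a Morse predecomposition of $X$. If among the admissible preorders on $\mathbb P$ there is a partial order, then the indexed family $\mathcal M':=\{M_{\{p\}}\mid p\in\mathbb P\}$ is a Morse decomposition of $X$.
   Context: Notation: $\operatorname{cl}$ is closure; $A\subset X$ is locally closed if $\operatorname{cl}A\setminus A$ is closed. A multivector field $\mathcal V$ on $X$ is a partition of $X$ into locally closed sets (multivectors); $[x]_{\mathcal V}$ is the multivector containing $x$. A multivector $V$ is critical if the relative singular homology $H(\operatorname{cl}V,\operatorname{cl}V\setminus V)$ is nontrivial, regular otherwise. $A$ is $\mathcal V$-compatible if it is a union of multivectors; the $\mathcal V$-hull $\langle A\rangle_{\mathcal V}$ is the smallest locally closed $\mathcal V$-compatible set containing $A$. Put $\Pi_{\mathcal V}(x)=\operatorname{cl}\{x\}\cup[x]_{\mathcal V}$. A solution is a partial map $\gamma:\mathbb Z\nrightarrow X$ whose domain is an interval of integers and $\gamma(t+1)\in\Pi_{\mathcal V}(\gamma(t))$ whenever $t,t+1\in\operatorname{dom}\gamma$; a path is a solution with finite domain; a full solution has domain $\mathbb Z$. For a full solution, $\alpha(\gamma)=\langle\bigcap_{t\in\mathbb Z,t\le0}\gamma((-\infty,t])\rangle_{\mathcal V}$ and $\omega(\gamma)=\langle\bigcap_{t\in\mathbb Z,t\ge0}\gamma([t,\infty))\rangle_{\mathcal V}$. A full solution is essential unless $\alpha(\gamma)$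 or $\omega(\gamma)$ is contained in a single regular multivector. An essential solution in $A$ is an essential full solution with image in $A$. For $S\subset X$, $\operatorname{Inv}S$ is the set of $x\in S$ such that some essential solution $\gamma$ in $S$ has $\gamma(0)=x$; $S$ is invariant if $\operatorname{Inv}S=S$. An invariant set $S$ is an isolated invariant set if there is a closed $N\supset\Pi_{\mathcal V}(S)$ such that every path in $N$ with both endpoints in $S$ has image in $S$. Links: for invariant $S_1,S_2$, a full solution $\gamma$ is a link from $S_1$ to $S_2$ if $\alpha(\gamma)\cap S_1\ne\emptyset\ne\omega(\gamma)\cap S_2$. Morse predecomposition of $X$: an indexed family $\mathcal M=\{M_p\mid p\in\mathbb P\}$ of mutually disjoint isolated invariant subsets of $X$ such that every essential solution in $X$ is a link from $M_p$ to $M_q$ for some $p,q\in\mathbb P$. A preorder $\le$ on $\mathbb P$ is admissible if the existence of a link from $M_p$ to $M_q$ implies $q\le p$. An invariant $T\subset X$ is saturated (in $X$) if every essential solution $\gamma$ in $X$ with $\alpha(\gamma)\subset T$ and $\omega(\gamma)\subset T$ has $\operatorname{im}\gamma\subset T$. A Morse decomposition of $X$ is a Morse predecomposition all of whose members are saturated and for which some admissible preorder is a partial order. For $C\subset X$ put $\mathbb P_C=\{p\in\mathbb P\mid M_p\cap C\neq\emptyset\}$. For $\mathbb Q\subset\mathbb P$, let $\operatorname{eSol}_{\mathbb Q}(X)$ be the set of essential solutions $\gamma$ in $X$ with $\mathbb P_{\alpha(\gamma)}\cap\mathbb Q\ne\emptyset\ne\mathbb P_{\omega(\gamma)}\cap\mathbb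 Q$, and $M_{\mathbb Q}:=\bigcup\{\operatorname{im}\gamma\mid\gamma\in\operatorname{eSol}_{\mathbb Q}(X)\}$. *)

theory Defs
  imports "HOL-Analysis.Analysis" "HOL-Homology.Homology"
begin

definition locally_closed :: "'a topology \<Rightarrow> 'a set \<Rightarrow> bool" where
  "locally_closed X A \<longleftrightarrow> A \<subseteq> topspace X \<and> closedin X (X closure_of A - A)"

definition multivector_field :: "'a topology \<Rightarrow> 'a set set \<Rightarrow> bool" where
  "multivector_field X V \<longleftrightarrow>
     \<Union>V = topspace X \<and> {} \<notin> V \<and>
     (\<forall>A\<in>V. \<forall>B\<in>V. A \<noteq> B \<longrightarrow> A \<inter> B = {}) \<and>
     (\<forall>A\<in>V. locally_closed X A)"

definition mv :: "'a set set \<Rightarrow> 'a \<Rightarrow> 'a set" where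
  "mv V x = (THE A. A \<in> V \<and> x \<in> A)"

definition critical :: "'a topology \<Rightarrow> 'a set \<Rightarrow> bool" where
  "critical X A \<longleftrightarrow>
     (\<exists>p. \<not> trivial_group
        (relative_homology_group p (subtopology X (X closure_of A)) (X closure_of A - A)))"

definition regular :: "'a topology \<Rightarrow> 'a set \<Rightarrow> bool" where
  "regular X A \<longleftrightarrow> \<not> critical X A"

definition compatible :: "'a set set \<Rightarrow> 'a set \<Rightarrow> bool" where
  "compatible V A \<longleftrightarrow> (\<exists>F\<subseteq>V. A = \<Union>F)"

definition vhull :: "'a topology \<Rightarrow> 'a set set \<Rightarrow> 'a set \<Rightarrow> 'a set" where
  "vhull X V A = \<Inter>{B. locally_closed X B \<and> compatible V B \<and> A \<subseteq> B}"

definition Pi_V :: "'a topology \<Rightarrow> 'a set set \<Rightarrow> 'a \<Rightarrow> 'a set" where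
  "Pi_V X V x = X closure_of {x} \<union> mv V x"

definition Pi_V_set :: "'a topology \<Rightarrow> 'a set set \<Rightarrow> 'a set \<Rightarrow> 'a set" where
  "Pi_V_set X V S = (\<Union>x\<in>S. Pi_V X V x)"

definition full_solution :: "'a topology \<Rightarrow> 'a set set \<Rightarrow> (int \<Rightarrow> 'a) \<Rightarrow> bool" where
  "full_solution X V g \<longleftrightarrow>
     (\<forall>t. g t \<in> topspace X) \<and> (\<forall>t. g (t + 1) \<in> Pi_V X V (g t))"

definition is_path :: "'a topology \<Rightarrow> 'a set set \<Rightarrow> (int \<Rightarrow> 'a) \<Rightarrow> int \<Rightarrow> int \<Rightarrow> bool" where
  "is_path X V g a b \<longleftrightarrow> a \<le> b \<and>
     (\<forall>t\<in>{a..b}. g t \<in> topspace X) \<and> (\<forall>t. a \<le> t \<and> t < b \<longrightarrow> g (t + 1) \<in> Pi_V X V (g t))"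

definition alpha_lim :: "'a topology \<Rightarrow> 'a set set \<Rightarrow> (int \<Rightarrow> 'a) \<Rightarrow> 'a set" where
  "alpha_lim X V g = vhull X V (\<Inter>t\<in>{..0}. g ` {..t})"

definition omega_lim :: "'a topology \<Rightarrow> 'a set set \<Rightarrow> (int \<Rightarrow> 'a) \<Rightarrow> 'a set" where
  "omega_lim X V g = vhull X V (\<Inter>t\<in>{0..}. g ` {t..})"

definition essential :: "'a topology \<Rightarrow> 'a set set \<Rightarrow> (int \<Rightarrow> 'a) \<Rightarrow> bool" where
  "essential X V g \<longleftrightarrow> full_solution X V g \<and>
     \<not> (\<exists>W\<in>V. regular X W \<and> alpha_lim X V g \<subseteq> W) \<and>
     \<not> (\<exists>W\<in>V. regular X W \<and> omega_lim X V g \<subseteq> W)"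

definition essential_in :: "'a topology \<Rightarrow> 'a set set \<Rightarrow> 'a set \<Rightarrow> (int \<Rightarrow> 'a) \<Rightarrow> bool" where
  "essential_in X V A g \<longleftrightarrow> essential X V g \<and> range g \<subseteq> A"

definition Inv :: "'a topology \<Rightarrow> 'a set set \<Rightarrow> 'a set \<Rightarrow> 'a set" where
  "Inv X V S = {x \<in> S. \<exists>g. essential_in X V S g \<and> g 0 = x}"

definition invariant :: "'a topology \<Rightarrow> 'a set set \<Rightarrow> 'a set \<Rightarrow> bool" where
  "invariant X V S \<longleftrightarrow> Inv X V S = S"

definition isolated_invariant :: "'a topology \<Rightarrow> 'a set set \<Rightarrow> 'a set \<Rightarrow> bool" where
  "isolated_invariant X V S \<longleftrightarrow> invariant X V S \<and>
     (\<exists>N. closedin X N \<and> Pi_V_set X V S \<subseteq> N \<and>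
        (\<forall>g a b. is_path X V g a b \<and> g ` {a..b} \<subseteq> N \<and> g a \<in> S \<and> g b \<in> S
                 \<longrightarrow> g ` {a..b} \<subseteq> S))"

definition is_link :: "'a topology \<Rightarrow> 'a set set \<Rightarrow> 'a set \<Rightarrow> 'a set \<Rightarrow> (int \<Rightarrow> 'a) \<Rightarrow> bool" where
  "is_link X V S1 S2 g \<longleftrightarrow> full_solution X V g \<and>
     alpha_lim X V g \<inter> S1 \<noteq> {} \<and> omega_lim X V g \<inter> S2 \<noteq> {}"

definition morse_predecomposition ::
  "'a topology \<Rightarrow> 'a set set \<Rightarrow> 'p set \<Rightarrow> ('p \<Rightarrow> 'a set) \<Rightarrow> bool" where
  "morse_predecomposition X V P M \<longleftrightarrow>
     (\<forall>p\<in>P. \<forall>q\<in>P. p \<noteq> q \<longrightarrow> M p \<inter> M q = {}) \<and>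
     (\<forall>p\<in>P. M p \<subseteq> topspace X \<and> isolated_invariant X V (M p)) \<and>
     (\<forall>g. essential_in X V (topspace X) g \<longrightarrow>
        (\<exists>p\<in>P. \<exists>q\<in>P. is_link X V (M p) (M q) g))"

definition admissible_preorder ::
  "'a topology \<Rightarrow> 'a set set \<Rightarrow> 'p set \<Rightarrow> ('p \<Rightarrow> 'a set) \<Rightarrow> ('p \<Rightarrow> 'p \<Rightarrow> bool) \<Rightarrow> bool" where
  "admissible_preorder X V P M rel \<longleftrightarrow>
     (\<forall>p\<in>P. rel p p) \<and>
     (\<forall>p\<in>P. \<forall>q\<in>P. \<forall>r\<in>P. rel p q \<and> rel q r \<longrightarrow> rel p r) \<and>
     (\<forall>p\<in>P. \<forall>q\<in>P. (\<exists>g. is_link X V (M p) (M q) g) \<longrightarrow> rel q p)"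

definition partial_order_on_set :: "'p set \<Rightarrow> ('p \<Rightarrow> 'p \<Rightarrow> bool) \<Rightarrow> bool" where
  "partial_order_on_set P rel \<longleftrightarrow>
     (\<forall>p\<in>P. rel p p) \<and>
     (\<forall>p\<in>P. \<forall>q\<in>P. \<forall>r\<in>P. rel p q \<and> rel q r \<longrightarrow> rel p r) \<and>
     (\<forall>p\<in>P. \<forall>q\<in>P. rel p q \<and> rel q p \<longrightarrow> p = q)"

definition saturated :: "'a topology \<Rightarrow> 'a set set \<Rightarrow> 'a set \<Rightarrow> bool" where
  "saturated X V T \<longleftrightarrow> invariant X V T \<and>
     (\<forall>g. essential_in X V (topspace X) g \<and> alpha_lim X V g \<subseteq> T \<and> omega_lim X V g \<subseteq> T
          \<longrightarrow> range g \<subseteq> T)"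

definition morse_decomposition ::
  "'a topology \<Rightarrow> 'a set set \<Rightarrow> 'p set \<Rightarrow> ('p \<Rightarrow> 'a set) \<Rightarrow> bool" where
  "morse_decomposition X V P M \<longleftrightarrow>
     morse_predecomposition X V P M \<and>
     (\<forall>p\<in>P. saturated X V (M p)) \<and>
     (\<exists>rel. admissible_preorder X V P M rel \<and> partial_order_on_set P rel)"

definition P_of :: "'p set \<Rightarrow> ('p \<Rightarrow> 'a set) \<Rightarrow> 'a set \<Rightarrow> 'p set" where
  "P_of P M C = {p \<in> P. M p \<inter> C \<noteq> {}}"

definition eSol :: "'a topology \<Rightarrow> 'a set set \<Rightarrow> 'p set \<Rightarrow> ('p \<Rightarrow> 'a set) \<Rightarrow> 'p set
                     \<Rightarrow> (int \<Rightarrow> 'a) set" where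
  "eSol X V P M Q = {g. essential_in X V (topspace X) g \<and>
      P_of P M (alpha_lim X V g) \<inter> Q \<noteq> {} \<and> P_of P M (omega_lim X V g) \<inter> Q \<noteq> {}}"

definition M_Q :: "'a topology \<Rightarrow> 'a set set \<Rightarrow> 'p set \<Rightarrow> ('p \<Rightarrow> 'a set) \<Rightarrow> 'p set \<Rightarrow> 'a set" where
  "M_Q X V P M Q = \<Union>{range g | g. g \<in> eSol X V P M Q}"

end

theory Submission
  imports Defs
begin

text \<open>
  Write x \<leadsto> y if y is reached from x by a chain of steps y \<in> Pi_V x. The \<alpha>- and
  \<omega>-limits of a full solution depend only on the values it takes infinitely often in the
  past and in the future, so solutions can be spliced along \<leadsto>-chains without changing
  their limits. Consequently every M_Q {p} is \<leadsto>-convex, hence invariant and isolated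
  by X itself, and a chain from M_Q {p} to M_Q {q} yields a link from M p to M q, so q \<le> p.
  In a finite space the V-hull of a set T only contains points lying \<leadsto>-between points
  of T; thus a link between the new sets is again such a chain. Antisymmetry of \<le> now
  gives disjointness, saturation, and admissibility of the same partial order.
\<close>

section \<open>Values recurring in the past and in the future\<close>

definition past_recurrent :: "(int \<Rightarrow> 'a) \<Rightarrow> 'a set" where
  "past_recurrent g = {x. \<forall>t. \<exists>u\<le>t. g u = x}"

definition future_recurrent :: "(int \<Rightarrow> 'a) \<Rightarrow> 'a set" where
  "future_recurrent g = {x. \<forall>t. \<exists>u\<ge>t. g u = x}"

lemma alpha_lim_eq_vhull: "alpha_lim X V g = vhull X V (past_recurrent g)"
proof -
  have "(\<Inter>t\<in>{..0}. g ` {..t}) = past_recurrent g"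
  proof (intro equalityI subsetI)
    fix x assume x: "x \<in> (\<Inter>t\<in>{..0}. g ` {..t})"
    have "\<exists>u\<le>t. g u = x" for t
      using x[THEN INT_D, of "min t 0"] by auto
    then show "x \<in> past_recurrent g" unfolding past_recurrent_def by simp
  qed (force simp: past_recurrent_def)
  then show ?thesis unfolding alpha_lim_def by simp
qed

lemma omega_lim_eq_vhull: "omega_lim X V g = vhull X V (future_recurrent g)"
proof -
  have "(\<Inter>t\<in>{0..}. g ` {t..}) = future_recurrent g"
  proof (intro equalityI subsetI)
    fix x assume x: "x \<in> (\<Inter>t\<in>{0..}. g ` {t..})"
    have "\<exists>u\<ge>t. g u = x" for t
      using x[THEN INT_D, of "max t 0"] by auto
    then show "x \<in> future_recurrent g" unfolding future_recurrent_def by simp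
  qed (force simp: future_recurrent_def)
  then show ?thesis unfolding omega_lim_def by simp
qed

lemma past_recurrent_shift: "past_recurrent (\<lambda>t. g (t + k)) = past_recurrent g"
proof -
  have "(\<exists>u\<le>t. g (u + k) = x) \<longleftrightarrow> (\<exists>u\<le>t + k. g u = x)" for t x
    by (metis add_le_cancel_right diff_add_cancel)
  moreover have "(\<forall>t. \<exists>u\<le>t + k. g u = x) \<longleftrightarrow> (\<forall>t. \<exists>u\<le>t. g u = x)" for x
    by (metis diff_add_cancel)
  ultimately show ?thesis unfolding past_recurrent_def by simp
qed

lemma future_recurrent_shift: "future_recurrent (\<lambda>t. g (t + k)) = future_recurrent g"
proof -
  have "(\<exists>u\<ge>t. g (u + k) = x) \<longleftrightarrow> (\<exists>u\<ge>t + k. g u = x)" for t x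
    by (metis add_le_cancel_right diff_add_cancel)
  moreover have "(\<forall>t. \<exists>u\<ge>t + k. g u = x) \<longleftrightarrow> (\<forall>t. \<exists>u\<ge>t. g u = x)" for x
    by (metis diff_add_cancel)
  ultimately show ?thesis unfolding future_recurrent_def by simp
qed

lemma past_recurrent_cong:
  assumes "\<And>t. t \<le> c \<Longrightarrow> h t = g t"
  shows "past_recurrent h = past_recurrent g"
  unfolding past_recurrent_def using assms by (metis min.cobounded1 min.cobounded2 order.trans)

lemma future_recurrent_cong:
  assumes "\<And>t. t \<ge> c \<Longrightarrow> h t = g t"
  shows "future_recurrent h = future_recurrent g"
  unfolding future_recurrent_def using assms by (metis max.cobounded1 max.cobounded2 order.trans)

lemma past_recurrent_nonempty:
  assumes "finite (range g)"
  shows "past_recurrent g \<noteq> {}"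
proof -
  have "finite (g ` {..0})" using assms by (rule finite_subset[rotated]) auto
  then obtain x where x: "infinite (g -` {x} \<inter> {..0})"
    using inf_img_fin_dom'[OF _ infinite_Iic] by blast
  have "\<exists>u\<le>t. g u = x" for t
  proof (rule ccontr)
    assume "\<not> ?thesis"
    then have "g -` {x} \<inter> {..0} \<subseteq> {t<..0}" by (auto simp flip: not_le)
    then show False using x finite_subset by blast
  qed
  then show ?thesis unfolding past_recurrent_def by blast
qed

lemma future_recurrent_nonempty:
  assumes "finite (range g)"
  shows "future_recurrent g \<noteq> {}"
proof -
  have "finite (g ` {0..})" using assms by (rule finite_subset[rotated]) auto
  then obtain x where x: "infinite (g -` {x} \<inter> {0..})"
    using inf_img_fin_dom'[OF _ infinite_Ici] by blast
  have "\<exists>u\<ge>t. g u = x" for t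
  proof (rule ccontr)
    assume "\<not> ?thesis"
    then have "g -` {x} \<inter> {0..} \<subseteq> {0..<t}" by (auto simp flip: not_le)
    then show False using x finite_subset by blast
  qed
  then show ?thesis unfolding future_recurrent_def by blast
qed

lemma past_recurrent_subset_range: "past_recurrent g \<subseteq> range g"
  unfolding past_recurrent_def by auto

lemma future_recurrent_subset_range: "future_recurrent g \<subseteq> range g"
  unfolding future_recurrent_def by auto

section \<open>Splicing solutions along chains of steps\<close>

definition mv_step :: "'a topology \<Rightarrow> 'a set set \<Rightarrow> 'a \<Rightarrow> 'a \<Rightarrow> bool" where
  "mv_step X V x y \<longleftrightarrow> x \<in> topspace X \<and> y \<in> topspace X \<and> y \<in> Pi_V X V x"

lemma full_solution_is_path: "full_solution X V g \<Longrightarrow> s \<le> t \<Longrightarrow> is_path X V g s t"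
  unfolding full_solution_def is_path_def by simp

lemma is_path_reaches:
  assumes "is_path X V g a b" "a \<le> s" "s \<le> t" "t \<le> b"
  shows "(mv_step X V)\<^sup>*\<^sup>* (g s) (g t)"
  using assms(3,4)
proof (induction t rule: int_ge_induct)
  case (step i)
  then have "mv_step X V (g i) (g (i + 1))"
    using assms(1,2) unfolding is_path_def mv_step_def by auto
  with step show ?case by (simp add: rtranclp.rtrancl_into_rtrancl)
qed simp

lemma full_solution_shift: "full_solution X V g \<Longrightarrow> full_solution X V (\<lambda>t. g (t + k))"
  unfolding full_solution_def by (metis add.commute add.left_commute)

lemma full_solution_const: "x \<in> topspace X \<Longrightarrow> full_solution X V (\<lambda>_. x)"
  unfolding full_solution_def Pi_V_def using closure_of_subset[of "{x}" X] by auto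

definition join_solutions :: "(int \<Rightarrow> 'a) \<Rightarrow> (int \<Rightarrow> 'a) \<Rightarrow> int \<Rightarrow> 'a" where
  "join_solutions g h t = (if t \<le> 0 then g t else h (t - 1))"

lemma full_solution_join_solutions:
  assumes "full_solution X V g" "full_solution X V h" "h 0 \<in> Pi_V X V (g 0)"
  shows "full_solution X V (join_solutions g h)"
  unfolding full_solution_def
proof (intro conjI allI)
  fix t :: int
  show "join_solutions g h t \<in> topspace X"
    using assms unfolding full_solution_def join_solutions_def by simp
  consider "t < 0" | "t = 0" | "t > 0" by linarith
  then show "join_solutions g h (t + 1) \<in> Pi_V X V (join_solutions g h t)"
  proof cases
    case 3
    then have "h (t - 1 + 1) \<in> Pi_V X V (h (t - 1))"
      using assms(2) unfolding full_solution_def by blast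
    with 3 show ?thesis by (simp add: join_solutions_def)
  qed (use assms in \<open>auto simp: join_solutions_def full_solution_def\<close>)
qed

lemma past_recurrent_join_solutions: "past_recurrent (join_solutions g h) = past_recurrent g"
  by (rule past_recurrent_cong[of 0]) (simp add: join_solutions_def)

lemma future_recurrent_join_solutions: "future_recurrent (join_solutions g h) = future_recurrent h"
proof -
  have "future_recurrent (join_solutions g h) = future_recurrent (\<lambda>t. h (t + -1))"
    by (rule future_recurrent_cong[of 1]) (simp add: join_solutions_def)
  then show ?thesis by (simp only: future_recurrent_shift)
qed

lemma full_solution_from_past:
  assumes "(mv_step X V)\<^sup>*\<^sup>* (g 0) z" "full_solution X V g"
  shows "\<exists>h. full_solution X V h \<and> h 0 = z \<and> past_recurrent h = past_recurrent g"
  using assms(1)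
proof (induction rule: rtranclp_induct)
  case base
  then show ?case using assms(2) by blast
next
  case (step y z)
  then obtain h where h: "full_solution X V h" "h 0 = y" "past_recurrent h = past_recurrent g"
    by blast
  let ?h = "join_solutions h (\<lambda>_. z)"
  have "full_solution X V ?h"
    using step(2) h(1,2)
    by (intro full_solution_join_solutions full_solution_const) (auto simp: mv_step_def)
  then have "full_solution X V (\<lambda>t. ?h (t + 1))"
    by (rule full_solution_shift)
  moreover have "past_recurrent (\<lambda>t. ?h (t + 1)) = past_recurrent g"
    using h(3) past_recurrent_shift[of ?h 1] by (simp add: past_recurrent_join_solutions)
  moreover have "?h (0 + 1) = z" by (simp add: join_solutions_def)
  ultimately show ?case by (intro exI[of _ "\<lambda>t. ?h (t + 1)"]) simp
qed

lemma full_solution_to_future: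
  assumes "(mv_step X V)\<^sup>*\<^sup>* z (g 0)" "full_solution X V g"
  shows "\<exists>h. full_solution X V h \<and> h 0 = z \<and> future_recurrent h = future_recurrent g"
  using assms(1)
proof (induction rule: converse_rtranclp_induct)
  case base
  then show ?case using assms(2) by blast
next
  case (step y z)
  then obtain h where h: "full_solution X V h" "h 0 = z" "future_recurrent h = future_recurrent g"
    by blast
  have "full_solution X V (join_solutions (\<lambda>_. y) h)"
    using step(1) h(1,2)
    by (intro full_solution_join_solutions full_solution_const) (auto simp: mv_step_def)
  moreover have "future_recurrent (join_solutions (\<lambda>_. y) h) = future_recurrent g"
    using h(3) by (simp add: future_recurrent_join_solutions)
  moreover have "join_solutions (\<lambda>_. y) h 0 = y" by (simp add: join_solutions_def)
  ultimately show ?case by blast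
qed

lemma full_solution_through:
  assumes "full_solution X V g1" "full_solution X V g2"
    and "(mv_step X V)\<^sup>*\<^sup>* (g1 s) z" "(mv_step X V)\<^sup>*\<^sup>* z (g2 t)"
  shows "\<exists>h. full_solution X V h \<and> h 0 = z \<and>
    past_recurrent h = past_recurrent g1 \<and> future_recurrent h = future_recurrent g2"
proof -
  obtain h1 where h1: "full_solution X V h1" "h1 0 = z" "past_recurrent h1 = past_recurrent g1"
    using full_solution_from_past[of X V "\<lambda>u. g1 (u + s)"] assms(1,3)
      full_solution_shift[of X V g1 s] past_recurrent_shift[of g1 s] by auto
  obtain h2 where h2: "full_solution X V h2" "h2 0 = z" "future_recurrent h2 = future_recurrent g2"
    using full_solution_to_future[of X V z "\<lambda>u. g2 (u + t)"] assms(2,4)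
      full_solution_shift[of X V g2 t] future_recurrent_shift[of g2 t] by auto
  let ?h = "join_solutions h1 (\<lambda>u. h2 (u + 1))"
  have "h2 (0 + 1) \<in> Pi_V X V (h2 0)"
    using h2(1) unfolding full_solution_def by blast
  then have "full_solution X V ?h"
    using h1(1,2) h2(2) full_solution_shift[OF h2(1), of 1]
    by (intro full_solution_join_solutions) auto
  moreover have "?h 0 = z" using h1(2) by (simp add: join_solutions_def)
  moreover have "past_recurrent ?h = past_recurrent g1"
    using h1(3) by (simp add: past_recurrent_join_solutions)
  moreover have "future_recurrent ?h = future_recurrent g2"
    using h2(3) future_recurrent_shift[of h2 1] by (simp add: future_recurrent_join_solutions)
  ultimately show ?thesis by blast
qed

lemma essential_solution_through:
  assumes "essential X V g1" "essential X V g2"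
    and "(mv_step X V)\<^sup>*\<^sup>* (g1 s) z" "(mv_step X V)\<^sup>*\<^sup>* z (g2 t)"
  shows "\<exists>h. essential_in X V (topspace X) h \<and> h 0 = z \<and>
    alpha_lim X V h = alpha_lim X V g1 \<and> omega_lim X V h = omega_lim X V g2"
proof -
  obtain h where h: "full_solution X V h" "h 0 = z"
    "past_recurrent h = past_recurrent g1" "future_recurrent h = future_recurrent g2"
    using full_solution_through[of X V g1 g2 s z t] assms unfolding essential_def by blast
  then have "alpha_lim X V h = alpha_lim X V g1" "omega_lim X V h = omega_lim X V g2"
    by (simp_all add: alpha_lim_eq_vhull omega_lim_eq_vhull)
  moreover from this have "essential X V h"
    using assms(1,2) h(1) unfolding essential_def by simp
  ultimately show ?thesis
    using h(1,2) unfolding essential_in_def full_solution_def by blast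
qed

section \<open>V-hulls in finite spaces\<close>

lemma mv_eqI:
  assumes "multivector_field X V" "A \<in> V" "x \<in> A"
  shows "mv V x = A"
  unfolding mv_def
proof (rule the_equality)
  show "A \<in> V \<and> x \<in> A" using assms(2,3) ..
  show "B = A" if "B \<in> V \<and> x \<in> B" for B
    using that assms unfolding multivector_field_def by blast
qed

lemma mv_mem:
  assumes "multivector_field X V" "x \<in> topspace X"
  shows "mv V x \<in> V" "x \<in> mv V x"
proof -
  obtain A where "A \<in> V" "x \<in> A"
    using assms unfolding multivector_field_def by blast
  then show "mv V x \<in> V" "x \<in> mv V x" using mv_eqI[OF assms(1)] by auto
qed

lemma mv_subset_topspace:
  assumes "multivector_field X V" "x \<in> topspace X"
  shows "mv V x \<subseteq> topspace X"
  using mv_mem[OF assms] assms(1) unfolding multivector_field_def by blast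

lemma Pi_V_subset_topspace:
  assumes "multivector_field X V" "x \<in> topspace X"
  shows "Pi_V X V x \<subseteq> topspace X"
  unfolding Pi_V_def using closure_of_subset_topspace[of X "{x}"] mv_subset_topspace[OF assms]
  by blast

lemma mv_step_closure_of:
  "x \<in> topspace X \<Longrightarrow> y \<in> X closure_of {x} \<Longrightarrow> mv_step X V x y"
  unfolding mv_step_def Pi_V_def using closure_of_subset_topspace[of X "{x}"] by blast

lemma mv_step_mv:
  assumes "multivector_field X V" "x \<in> topspace X" "y \<in> mv V x"
  shows "mv_step X V x y" "mv_step X V y x"
proof -
  have "y \<in> topspace X" using mv_subset_topspace[OF assms(1,2)] assms(3) by blast
  moreover have "mv V y = mv V x"
    using mv_eqI[OF assms(1) mv_mem(1)[OF assms(1,2)] assms(3)] .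
  ultimately show "mv_step X V x y" "mv_step X V y x"
    using assms(2,3) mv_mem(2)[OF assms(1)] unfolding mv_step_def Pi_V_def by auto
qed

lemma closure_of_finite_eq_UN_points:
  assumes "finite S"
  shows "X closure_of S = (\<Union>s\<in>S. X closure_of {s})"
proof -
  have "X closure_of S = X closure_of (\<Union>s\<in>S. {s})" by simp
  also have "\<dots> = (\<Union>s\<in>S. X closure_of {s})"
    using assms by (subst closure_of_Union) (auto simp: image_image)
  finally show ?thesis .
qed

definition between_set :: "'a topology \<Rightarrow> 'a set set \<Rightarrow> 'a set \<Rightarrow> 'a set" where
  "between_set X V T = {z \<in> topspace X.
     (\<exists>a\<in>T. (mv_step X V)\<^sup>*\<^sup>* a z) \<and> (\<exists>b\<in>T. (mv_step X V)\<^sup>*\<^sup>* z b)}"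

lemma between_set_intermediate:
  assumes "x \<in> between_set X V T" "y \<in> between_set X V T"
    and "(mv_step X V)\<^sup>*\<^sup>* x z" "(mv_step X V)\<^sup>*\<^sup>* z y" "z \<in> topspace X"
  shows "z \<in> between_set X V T"
  using assms unfolding between_set_def by (blast intro: rtranclp_trans)

lemma compatible_between_set:
  assumes "multivector_field X V"
  shows "compatible V (between_set X V T)"
  unfolding compatible_def
proof (intro exI conjI)
  let ?B = "between_set X V T"
  have B_topspace: "?B \<subseteq> topspace X" unfolding between_set_def by blast
  show "mv V ` ?B \<subseteq> V" using mv_mem(1)[OF assms] B_topspace by blast
  have "mv V z \<subseteq> ?B" if "z \<in> ?B" for z
  proof
    fix w assume "w \<in> mv V z"
    then have "mv_step X V z w" "mv_step X V w z" "w \<in> topspace X"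
      using mv_step_mv[OF assms] mv_subset_topspace[OF assms] that B_topspace by blast+
    then show "w \<in> ?B" using between_set_intermediate[OF that that] by blast
  qed
  then show "?B = \<Union>(mv V ` ?B)"
    using mv_mem(2)[OF assms] B_topspace by blast
qed

lemma locally_closed_between_set:
  assumes "finite (topspace X)"
  shows "locally_closed X (between_set X V T)"
proof -
  let ?B = "between_set X V T"
  let ?C = "X closure_of ?B - ?B"
  have B_topspace: "?B \<subseteq> topspace X" unfolding between_set_def by blast
  have C_topspace: "?C \<subseteq> topspace X"
    using closure_of_subset_topspace[of X ?B] by blast
  have closure_B: "X closure_of ?B = (\<Union>b\<in>?B. X closure_of {b})"
    using finite_subset[OF B_topspace assms] by (rule closure_of_finite_eq_UN_points)
  have closure_C: "X closure_of ?C = (\<Union>c\<in>?C. X closure_of {c})"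
    using finite_subset[OF C_topspace assms] by (rule closure_of_finite_eq_UN_points)
  \<comment> \<open>a point c of ?C with v \<in> cl {c} in ?B would lie between two points of ?B\<close>
  have "v \<in> ?C" if c: "c \<in> ?C" and v: "v \<in> X closure_of {c}" for c v
  proof
    have "X closure_of {c} \<subseteq> X closure_of (X closure_of ?B)"
      using c by (intro closure_of_mono) blast
    then show "v \<in> X closure_of ?B" using v by auto
    show "v \<notin> ?B"
    proof
      assume "v \<in> ?B"
      obtain b where b: "b \<in> ?B" "c \<in> X closure_of {b}" using c closure_B by blast
      have "c \<in> topspace X" using c C_topspace by blast
      then have "(mv_step X V)\<^sup>*\<^sup>* b c" "(mv_step X V)\<^sup>*\<^sup>* c v"
        using b c v B_topspace mv_step_closure_of by (metis r_into_rtranclp subsetD)+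
      then have "c \<in> ?B"
        using between_set_intermediate[OF b(1) \<open>v \<in> ?B\<close>] \<open>c \<in> topspace X\<close> by blast
      then show False using c by blast
    qed
  qed
  then have "X closure_of ?C \<subseteq> ?C" unfolding closure_C by blast
  then have "closedin X ?C" using C_topspace closure_of_subset_eq by blast
  then show ?thesis unfolding locally_closed_def using B_topspace by blast
qed

lemma vhull_subset: "A \<subseteq> vhull X V A"
  unfolding vhull_def by blast

lemma vhull_subset_between_set:
  assumes "finite (topspace X)" "multivector_field X V" "T \<subseteq> topspace X"
  shows "vhull X V T \<subseteq> between_set X V T"
proof -
  have "T \<subseteq> between_set X V T" using assms(3) unfolding between_set_def by blast
  then show ?thesis
    unfolding vhull_def
    using locally_closed_between_set[OF assms(1)] compatible_between_set[OF assms(2)] by blast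
qed

lemma alpha_lim_reaches_omega_lim:
  assumes "finite (topspace X)" "multivector_field X V" "full_solution X V g"
    and "y \<in> alpha_lim X V g" "z \<in> omega_lim X V g"
  shows "(mv_step X V)\<^sup>*\<^sup>* y z"
proof -
  have range_g: "range g \<subseteq> topspace X" using assms(3) unfolding full_solution_def by blast
  have "y \<in> between_set X V (past_recurrent g)"
    using assms(4) vhull_subset_between_set[OF assms(1,2)]
      past_recurrent_subset_range[of g] range_g
    unfolding alpha_lim_eq_vhull by (meson order.trans subsetD)
  then obtain b where b: "b \<in> past_recurrent g" "(mv_step X V)\<^sup>*\<^sup>* y b"
    unfolding between_set_def by blast
  then obtain s where s: "g s = b" unfolding past_recurrent_def by blast
  have "z \<in> between_set X V (future_recurrent g)"
    using assms(5) vhull_subset_between_set[OF assms(1,2)]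
      future_recurrent_subset_range[of g] range_g
    unfolding omega_lim_eq_vhull by (meson order.trans subsetD)
  then obtain a where a: "a \<in> future_recurrent g" "(mv_step X V)\<^sup>*\<^sup>* a z"
    unfolding between_set_def by blast
  then obtain u where u: "u \<ge> s" "g u = a" unfolding future_recurrent_def by blast
  have "(mv_step X V)\<^sup>*\<^sup>* (g s) (g u)"
    using is_path_reaches[OF full_solution_is_path[OF assms(3) u(1)]] u(1) by simp
  then show ?thesis using s u(2) b(2) a(2) by (meson rtranclp_trans)
qed

section \<open>The sets M_{p}\<close>

lemma mem_M_Q: "x \<in> M_Q X V P M Q \<longleftrightarrow> (\<exists>g s. g \<in> eSol X V P M Q \<and> g s = x)"
  unfolding M_Q_def by blast

lemma range_subset_M_Q: "g \<in> eSol X V P M Q \<Longrightarrow> range g \<subseteq> M_Q X V P M Q"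
  unfolding M_Q_def by blast

lemma eSol_essential: "g \<in> eSol X V P M Q \<Longrightarrow> essential X V g"
  unfolding eSol_def essential_in_def by blast

lemma eSol_singleton:
  "g \<in> eSol X V P M {p} \<longleftrightarrow> essential_in X V (topspace X) g \<and> p \<in> P \<and>
     M p \<inter> alpha_lim X V g \<noteq> {} \<and> M p \<inter> omega_lim X V g \<noteq> {}"
  unfolding eSol_def P_of_def by auto

lemma eSol_mix_limits:
  assumes "g1 \<in> eSol X V P M Q" "g2 \<in> eSol X V P M Q" "essential_in X V (topspace X) h"
    and "alpha_lim X V h = alpha_lim X V g1" "omega_lim X V h = omega_lim X V g2"
  shows "h \<in> eSol X V P M Q"
  using assms unfolding eSol_def by simp

lemma M_Q_convex:
  assumes "x \<in> M_Q X V P M Q" "y \<in> M_Q X V P M Q"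
    and "(mv_step X V)\<^sup>*\<^sup>* x z" "(mv_step X V)\<^sup>*\<^sup>* z y"
  shows "z \<in> M_Q X V P M Q"
proof -
  obtain g1 s where g1: "g1 \<in> eSol X V P M Q" "g1 s = x"
    using assms(1) unfolding mem_M_Q by blast
  obtain g2 t where g2: "g2 \<in> eSol X V P M Q" "g2 t = y"
    using assms(2) unfolding mem_M_Q by blast
  obtain h where h: "essential_in X V (topspace X) h" "h 0 = z"
    "alpha_lim X V h = alpha_lim X V g1" "omega_lim X V h = omega_lim X V g2"
    using essential_solution_through[of X V g1 g2 s z t] eSol_essential g1 g2 assms(3,4) by blast
  then have "h \<in> eSol X V P M Q" using eSol_mix_limits g1(1) g2(1) by blast
  then show ?thesis using h(2) unfolding mem_M_Q by blast
qed

lemma invariant_M_Q: "invariant X V (M_Q X V P M Q)"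
proof -
  have "x \<in> Inv X V (M_Q X V P M Q)" if x: "x \<in> M_Q X V P M Q" for x
  proof -
    obtain g s where g: "g \<in> eSol X V P M Q" "g s = x" using x unfolding mem_M_Q by blast
    then obtain h where h: "essential_in X V (topspace X) h" "h 0 = x"
      "alpha_lim X V h = alpha_lim X V g" "omega_lim X V h = omega_lim X V g"
      using essential_solution_through[of X V g g s x s] eSol_essential by blast
    then have "range h \<subseteq> M_Q X V P M Q"
      using eSol_mix_limits g(1) range_subset_M_Q by blast
    then show ?thesis using x h(1,2) unfolding Inv_def essential_in_def by blast
  qed
  then show ?thesis unfolding invariant_def Inv_def by blast
qed

lemma isolated_invariant_M_Q:
  assumes "multivector_field X V"
  shows "isolated_invariant X V (M_Q X V P M Q)"
  unfolding isolated_invariant_def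
proof (intro conjI invariant_M_Q exI[of _ "topspace X"] allI impI)
  have "M_Q X V P M Q \<subseteq> topspace X"
    unfolding M_Q_def eSol_def essential_in_def by blast
  then show "Pi_V_set X V (M_Q X V P M Q) \<subseteq> topspace X"
    unfolding Pi_V_set_def using Pi_V_subset_topspace[OF assms] by blast
  fix g a b
  assume path: "is_path X V g a b \<and> g ` {a..b} \<subseteq> topspace X \<and>
      g a \<in> M_Q X V P M Q \<and> g b \<in> M_Q X V P M Q"
  have "g t \<in> M_Q X V P M Q" if "a \<le> t" "t \<le> b" for t
    using that path is_path_reaches[of X V g a b] M_Q_convex[of "g a" X V P M Q "g b" "g t"]
    by simp
  then show "g ` {a..b} \<subseteq> M_Q X V P M Q" by auto
qed simp

lemma subset_M_Q_singleton:
  assumes "finite (topspace X)" "p \<in> P" "invariant X V (M p)"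
  shows "M p \<subseteq> M_Q X V P M {p}"
proof
  fix x assume "x \<in> M p"
  then obtain g where g: "essential_in X V (M p) g" "g 0 = x"
    using assms(3) unfolding invariant_def Inv_def by blast
  then have ess: "essential X V g" and range_g: "range g \<subseteq> M p"
    unfolding essential_in_def by auto
  have range_top: "range g \<subseteq> topspace X"
    using ess unfolding essential_def full_solution_def by blast
  then have fin: "finite (range g)" using assms(1) finite_subset by blast
  have "M p \<inter> alpha_lim X V g \<noteq> {}"
    using past_recurrent_nonempty[OF fin] past_recurrent_subset_range[of g] range_g
      vhull_subset[of "past_recurrent g" X V]
    unfolding alpha_lim_eq_vhull by blast
  moreover have "M p \<inter> omega_lim X V g \<noteq> {}"
    using future_recurrent_nonempty[OF fin] future_recurrent_subset_range[of g] range_g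
      vhull_subset[of "future_recurrent g" X V]
    unfolding omega_lim_eq_vhull by blast
  ultimately have "g \<in> eSol X V P M {p}"
    using ess range_top assms(2) unfolding eSol_singleton essential_in_def by blast
  then show "x \<in> M_Q X V P M {p}" using g(2) unfolding mem_M_Q by blast
qed

lemma admissible_preorder_rel_if_reaches:
  assumes "admissible_preorder X V P M rel"
    and "x \<in> M_Q X V P M {p}" "y \<in> M_Q X V P M {q}" "(mv_step X V)\<^sup>*\<^sup>* x y"
  shows "rel q p"
proof -
  obtain g1 s where g1: "g1 \<in> eSol X V P M {p}" "g1 s = x"
    using assms(2) unfolding mem_M_Q by blast
  obtain g2 t where g2: "g2 \<in> eSol X V P M {q}" "g2 t = y"
    using assms(3) unfolding mem_M_Q by blast
  obtain h where h: "essential_in X V (topspace X) h"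
    "alpha_lim X V h = alpha_lim X V g1" "omega_lim X V h = omega_lim X V g2"
    using essential_solution_through[of X V g1 g2 s x t] eSol_essential g1 g2 assms(4) by blast
  have "is_link X V (M p) (M q) h"
    using h g1(1) g2(1) unfolding eSol_singleton is_link_def essential_in_def essential_def by auto
  moreover have "p \<in> P" "q \<in> P" using g1(1) g2(1) unfolding eSol_singleton by auto
  ultimately show ?thesis using assms(1) unfolding admissible_preorder_def by blast
qed

lemma M_Q_singletons_disjoint:
  assumes "admissible_preorder X V P M rel" "partial_order_on_set P rel"
    and "p \<in> P" "q \<in> P" "p \<noteq> q"
  shows "M_Q X V P M {p} \<inter> M_Q X V P M {q} = {}"
proof (rule ccontr)
  assume "M_Q X V P M {p} \<inter> M_Q X V P M {q} \<noteq> {}"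
  then obtain x where "x \<in> M_Q X V P M {p}" "x \<in> M_Q X V P M {q}" by blast
  then have "rel q p" "rel p q"
    using admissible_preorder_rel_if_reaches[OF assms(1)] by blast+
  then show False using assms(2-5) unfolding partial_order_on_set_def by blast
qed

lemma morse_predecomposition_link:
  assumes "morse_predecomposition X V P M" "essential_in X V (topspace X) g"
  obtains p q where "p \<in> P" "q \<in> P" "is_link X V (M p) (M q) g"
proof -
  have "\<forall>g. essential_in X V (topspace X) g \<longrightarrow> (\<exists>p\<in>P. \<exists>q\<in>P. is_link X V (M p) (M q) g)"
    using assms(1) unfolding morse_predecomposition_def by (elim conjE)
  then show thesis using that assms(2) by blast
qed

lemma morse_predecomposition_subset_M_Q_singleton:
  assumes "finite (topspace X)" "morse_predecomposition X V P M" "p \<in> P"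
  shows "M p \<subseteq> M_Q X V P M {p}"
proof -
  have "\<forall>p\<in>P. M p \<subseteq> topspace X \<and> isolated_invariant X V (M p)"
    using assms(2) unfolding morse_predecomposition_def by (elim conjE)
  then have "invariant X V (M p)"
    using assms(3) unfolding isolated_invariant_def by blast
  then show ?thesis by (rule subset_M_Q_singleton[OF assms(1,3)])
qed

lemma morse_predecomposition_M_Q_singletons:
  assumes "finite (topspace X)" "multivector_field X V" "morse_predecomposition X V P M"
    and "admissible_preorder X V P M rel" "partial_order_on_set P rel"
  shows "morse_predecomposition X V P (\<lambda>p. M_Q X V P M {p})"
  unfolding morse_predecomposition_def
proof (intro conjI ballI allI impI)
  fix p q assume "p \<in> P" "q \<in> P" "p \<noteq> q"
  then show "M_Q X V P M {p} \<inter> M_Q X V P M {q} = {}"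
    using M_Q_singletons_disjoint[OF assms(4,5)] by blast
next
  fix p
  show "M_Q X V P M {p} \<subseteq> topspace X"
    unfolding M_Q_def eSol_def essential_in_def by blast
  show "isolated_invariant X V (M_Q X V P M {p})"
    using isolated_invariant_M_Q[OF assms(2)] .
next
  fix g assume "essential_in X V (topspace X) g"
  then obtain p q where pq: "p \<in> P" "q \<in> P" and link: "is_link X V (M p) (M q) g"
    using morse_predecomposition_link[OF assms(3)] by blast
  have "M p \<subseteq> M_Q X V P M {p}" "M q \<subseteq> M_Q X V P M {q}"
    using morse_predecomposition_subset_M_Q_singleton[OF assms(1,3)] pq by blast+
  with link have "is_link X V (M_Q X V P M {p}) (M_Q X V P M {q}) g"
    unfolding is_link_def by blast
  with pq show "\<exists>p\<in>P. \<exists>q\<in>P. is_link X V (M_Q X V P M {p}) (M_Q X V P M {q}) g"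
    by blast
qed

lemma saturated_M_Q_singleton:
  assumes "finite (topspace X)" "morse_predecomposition X V P M"
    and "admissible_preorder X V P M rel" "partial_order_on_set P rel" "p \<in> P"
  shows "saturated X V (M_Q X V P M {p})"
  unfolding saturated_def
proof (intro conjI invariant_M_Q allI impI)
  fix g
  assume g: "essential_in X V (topspace X) g \<and>
    alpha_lim X V g \<subseteq> M_Q X V P M {p} \<and> omega_lim X V g \<subseteq> M_Q X V P M {p}"
  then obtain a b where ab: "a \<in> P" "b \<in> P" "is_link X V (M a) (M b) g"
    using morse_predecomposition_link[OF assms(2)] by blast
  have "M a \<subseteq> M_Q X V P M {a}" "M b \<subseteq> M_Q X V P M {b}"
    using morse_predecomposition_subset_M_Q_singleton[OF assms(1,2)] ab(1,2) by blast+
  then have "a = p" "b = p"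
    using M_Q_singletons_disjoint[OF assms(3,4) _ assms(5)] ab g
    unfolding is_link_def by blast+
  then have "g \<in> eSol X V P M {p}"
    using g ab(3) assms(5) unfolding eSol_singleton is_link_def by blast
  then show "range g \<subseteq> M_Q X V P M {p}" by (rule range_subset_M_Q)
qed

lemma admissible_preorder_M_Q_singletons:
  assumes "finite (topspace X)" "multivector_field X V" "admissible_preorder X V P M rel"
  shows "admissible_preorder X V P (\<lambda>p. M_Q X V P M {p}) rel"
proof -
  have "rel q p" if link: "is_link X V (M_Q X V P M {p}) (M_Q X V P M {q}) g" for p q g
  proof -
    obtain y z where "y \<in> alpha_lim X V g" "y \<in> M_Q X V P M {p}"
      "z \<in> omega_lim X V g" "z \<in> M_Q X V P M {q}" "full_solution X V g"
      using link unfolding is_link_def by blast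
    then show ?thesis
      using alpha_lim_reaches_omega_lim[OF assms(1,2)] admissible_preorder_rel_if_reaches[OF assms(3)]
      by blast
  qed
  then show ?thesis using assms(3) unfolding admissible_preorder_def by blast
qed

theorem corollary4p15:
  fixes X :: "'a topology" and V :: "'a set set" and P :: "'p set" and M :: "'p \<Rightarrow> 'a set"
  assumes "finite (topspace X)"
    and "t0_space X"
    and "multivector_field X V"
    and "invariant X V (topspace X)"
    and "morse_predecomposition X V P M"
    and "\<exists>rel. admissible_preorder X V P M rel \<and> partial_order_on_set P rel"
  shows "morse_decomposition X V P (\<lambda>p. M_Q X V P M {p})"
proof -
  obtain rel where rel: "admissible_preorder X V P M rel" "partial_order_on_set P rel"
    using assms(6) by blast
  have "morse_predecomposition X V P (\<lambda>p. M_Q X V P M {p})"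
    using morse_predecomposition_M_Q_singletons[OF assms(1,3,5) rel] .
  moreover have "\<forall>p\<in>P. saturated X V (M_Q X V P M {p})"
    using saturated_M_Q_singleton[OF assms(1,5) rel] by blast
  moreover have "admissible_preorder X V P (\<lambda>p. M_Q X V P M {p}) rel"
    using admissible_preorder_M_Q_singletons[OF assms(1,3) rel(1)] .
  ultimately show ?thesis
    unfolding morse_decomposition_def using rel(2) by blast
qed

end
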